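(* Let $p$ be a prime and $Q\in\mathbb{Q}_p[X_1,\dots,X_n]$ any quadratic form. Then: (i) each of the sets $Q(\mathbb{Q}_p^n)\setminus\{0\}$ and $R(Q(\mathbb{Q}_p^n))\setminus\{0\}$ is a union of cosets of $(\mathbb{Q}_p^* )^2$ in $\mathbb{Q}_p^*$ (i.e. of elements of $\mathbb{Q}_p^*/(\mathbb{Q}_p^* )^2$); (ii) the set $R(Q(\mathbb{Z}^n))$ is dense in $\mathbb{Q}_p$ if and only if $R(Q(\mathbb{Q}_p^n))=\mathbb{Q}_p$.
   Context: A quadratic form is a homogeneous polynomial of degree two, not all coefficients zero. $\mathbb{Q}_p^*$ is the multiplicative group of $\mathbb{Q}_p$ and $(\mathbb{Q}_p^* )^2$ its subgroup of nonzero squares. For a subset $A$ of a field, $R(A)=\{a/b: a,b\in A,\ b\neq 0\}$. For $S\subseteq\mathbb{Q}_p^n$, $Q(S)=\{Q(\mathbf{x}):\mathbf{x}\in S\}$. Density is with respect to the $p$-adic topology. *)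

theory Defs
  imports "HOL-Computational_Algebra.Computational_Algebra"
begin

definition padic_abs_rat :: "nat \<Rightarrow> rat \<Rightarrow> real" where
  "padic_abs_rat p q =
     (if q = 0 then 0
      else (let (a, b) = quotient_of q in
            real p powr (real (multiplicity (int p) b) - real (multiplicity (int p) a))))"

text \<open>This characterizes
  the completion Q_p of Q w.r.t. the p-adic absolute value (up to isometric
  isomorphism).\<close>
definition is_Qp :: "nat \<Rightarrow> ('a::field_char_0 \<Rightarrow> real) \<Rightarrow> bool" where
  "is_Qp p N \<longleftrightarrow>
     (\<forall>x. N x \<ge> 0 \<and> (N x = 0 \<longleftrightarrow> x = 0)) \<and>
     (\<forall>x y. N (x * y) = N x * N y) \<and>
     (\<forall>x y. N (x + y) \<le> N x + N y) \<and>
     (\<forall>q. N (of_rat q) = padic_abs_rat p q) \<and>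
     (\<forall>X :: nat \<Rightarrow> 'a.
        (\<forall>e>0. \<exists>M. \<forall>m\<ge>M. \<forall>k\<ge>M. N (X m - X k) < e) \<longrightarrow>
        (\<exists>L. \<forall>e>0. \<exists>M. \<forall>m\<ge>M. N (X m - L) < e)) \<and>
     (\<forall>x e. e > 0 \<longrightarrow> (\<exists>q. N (x - of_rat q) < e))"

definition qform :: "nat \<Rightarrow> (nat \<Rightarrow> nat \<Rightarrow> 'a::comm_ring_1) \<Rightarrow> (nat \<Rightarrow> 'a) \<Rightarrow> 'a" where
  "qform n c x = (\<Sum>i<n. \<Sum>j\<in>{i..<n}. c i j * x i * x j)"

definition nonzero_qform :: "nat \<Rightarrow> (nat \<Rightarrow> nat \<Rightarrow> 'a::zero) \<Rightarrow> bool" where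
  "nonzero_qform n c \<longleftrightarrow> (\<exists>i j. i \<le> j \<and> j < n \<and> c i j \<noteq> 0)"

definition ratio_set :: "'a::field set \<Rightarrow> 'a set" where
  "ratio_set A = {a / b | a b. a \<in> A \<and> b \<in> A \<and> b \<noteq> 0}"

definition union_sq_cosets :: "'a::field set \<Rightarrow> bool" where
  "union_sq_cosets S \<longleftrightarrow> 0 \<notin> S \<and> (\<forall>s\<in>S. \<forall>t. t \<noteq> 0 \<longrightarrow> s * t\<^sup>2 \<in> S)"

definition dense_wrt :: "('a::ab_group_add \<Rightarrow> real) \<Rightarrow> 'a set \<Rightarrow> bool" where
  "dense_wrt N S \<longleftrightarrow> (\<forall>x e. e > 0 \<longrightarrow> (\<exists>s\<in>S. N (x - s) < e))"

end

theory Submission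
  imports Defs
begin

(* Replacing x by t x multiplies Q(x) by t^2, which gives (i) for Q(K^n) and hence for its ratio
   set. For (ii), suppose every element is a ratio Q(u)/Q(v). Approximating u and v by rational
   vectors and using continuity of Q, the element is a limit of ratios of values at rational
   vectors; clearing denominators, these are ratios of values at integer vectors. Conversely, the
   nonzero squares contain a neighbourhood of 1: for |u - 1| < |2|^2/8 the map
   t -> t - (t^2 - u)/2 is a contraction near 1 whose limit point is a square root of u. So if
   R(Q(Z^n)) is dense, every nonzero x has an element s of R(Q(K^n)) with s/x a square, and x lies
   in the square class of s. *)

lemma qform_scale: "qform n c (\<lambda>i. t * x i) = t\<^sup>2 * qform n c x"
  unfolding qform_def power2_eq_square
  by (simp add: sum_distrib_left algebra_simps)

lemma qform_cong: "(\<And>i. i < n \<Longrightarrow> x i = y i) \<Longrightarrow> qform n c x = qform n c y"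
  unfolding qform_def by (intro sum.cong refl) auto

lemma qform_zero: "qform n c (\<lambda>i. 0) = 0"
  unfolding qform_def by simp

lemma ratio_set_mono: "A \<subseteq> B \<Longrightarrow> ratio_set A \<subseteq> ratio_set B"
  unfolding ratio_set_def by blast

lemma zero_in_ratio_set: "0 \<in> A \<Longrightarrow> ratio_set A \<noteq> {} \<Longrightarrow> 0 \<in> ratio_set A"
  unfolding ratio_set_def by force

lemma union_sq_cosets_range_qform: "union_sq_cosets (range (qform n c) - {0})"
  unfolding union_sq_cosets_def
proof (intro conjI ballI allI impI)
  fix s t :: 'a assume s: "s \<in> range (qform n c) - {0}" and "t \<noteq> 0"
  then obtain x where "s = qform n c x" by auto
  then have "s * t\<^sup>2 = qform n c (\<lambda>i. t * x i)" by (simp add: qform_scale mult.commute)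
  then show "s * t\<^sup>2 \<in> range (qform n c) - {0}" using s \<open>t \<noteq> 0\<close> by auto
qed simp

lemma union_sq_cosets_ratio_set:
  assumes "union_sq_cosets (A - {0})"
  shows "union_sq_cosets (ratio_set A - {0})"
  unfolding union_sq_cosets_def
proof (intro conjI ballI allI impI)
  fix s t :: 'a assume s: "s \<in> ratio_set A - {0}" and "t \<noteq> 0"
  then obtain a b where ab: "s = a / b" "a \<in> A" "b \<in> A" "b \<noteq> 0"
    unfolding ratio_set_def by auto
  then have "a * t\<^sup>2 \<in> A"
    using assms s \<open>t \<noteq> 0\<close> unfolding union_sq_cosets_def by auto
  moreover have "s * t\<^sup>2 = (a * t\<^sup>2) / b" using ab by simp
  ultimately show "s * t\<^sup>2 \<in> ratio_set A - {0}"
    using ab s \<open>t \<noteq> 0\<close> unfolding ratio_set_def by auto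
qed simp

lemma rat_vector_common_denominator:
  fixes q :: "nat \<Rightarrow> rat"
  shows "\<exists>d::int. d > 0 \<and> (\<exists>z. \<forall>i<n. of_int d * q i = of_int (z i))"
proof (induction n)
  case 0
  show ?case by (intro exI[of _ 1]) auto
next
  case (Suc n)
  then obtain d z where d: "d > 0" and z: "\<forall>i<n. of_int d * q i = of_int (z i)" by blast
  obtain a b where ab: "quotient_of (q n) = (a, b)" by fastforce
  then have "b > 0" and qn: "q n = of_int a / of_int b"
    by (simp_all add: quotient_of_denom_pos quotient_of_div)
  define z' where "z' i = (if i < n then z i * b else d * a)" for i
  have "of_int (d * b) * q i = of_int (z' i)" if "i < Suc n" for i
  proof (cases "i < n")
    case True
    then show ?thesis using z by (simp add: z'_def mult.commute mult.left_commute)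
  next
    case False
    with that have "i = n" by simp
    then show ?thesis using \<open>b > 0\<close> qn by (simp add: z'_def)
  qed
  moreover have "d * b > 0" using d \<open>b > 0\<close> by simp
  ultimately show ?case by blast
qed

lemma qform_of_rat_eq_qform_of_int:
  fixes q :: "nat \<Rightarrow> rat"
  obtains d z where "d \<noteq> 0"
    and "qform n c (\<lambda>i. of_rat (q i)) = qform n c (\<lambda>i. of_int (z i)) / (of_int d)\<^sup>2"
proof -
  obtain d z where "d > 0" and dz: "\<forall>i<n. of_int d * q i = of_int (z i)"
    using rat_vector_common_denominator by blast
  have "qform n c (\<lambda>i. of_int (z i)) = qform n c (\<lambda>i. of_int d * of_rat (q i))"
    by (rule qform_cong) (use dz in \<open>metis of_rat_mult of_rat_of_int_eq\<close>)
  then have "qform n c (\<lambda>i. of_int (z i)) = (of_int d)\<^sup>2 * qform n c (\<lambda>i. of_rat (q i))"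
    by (simp add: qform_scale)
  with \<open>d > 0\<close> show ?thesis by (intro that[of d z]) simp_all
qed

lemma ratio_qform_of_rat_in_ratio_set_int:
  fixes a b :: "nat \<Rightarrow> rat"
  assumes "qform n c (\<lambda>i. (of_rat (b i) :: 'a::field_char_0)) \<noteq> 0"
  shows "qform n c (\<lambda>i. of_rat (a i)) / qform n c (\<lambda>i. of_rat (b i))
           \<in> ratio_set (range (\<lambda>z. qform n c (\<lambda>i. (of_int (z i) :: 'a))))"
proof -
  obtain d1 z1 where d1: "d1 \<noteq> 0"
    and a: "qform n c (\<lambda>i. of_rat (a i)) = qform n c (\<lambda>i. of_int (z1 i)) / (of_int d1 :: 'a)\<^sup>2"
    by (rule qform_of_rat_eq_qform_of_int)
  obtain d2 z2 where d2: "d2 \<noteq> 0"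
    and b: "qform n c (\<lambda>i. of_rat (b i)) = qform n c (\<lambda>i. of_int (z2 i)) / (of_int d2 :: 'a)\<^sup>2"
    by (rule qform_of_rat_eq_qform_of_int)
  have scale: "qform n c (\<lambda>i. of_int (d * z i)) = (of_int d)\<^sup>2 * qform n c (\<lambda>i. (of_int (z i) :: 'a))"
    for d z using qform_scale[of n c "of_int d" "\<lambda>i. of_int (z i)"] by simp
  have "qform n c (\<lambda>i. of_rat (a i)) / qform n c (\<lambda>i. of_rat (b i))
        = qform n c (\<lambda>i. of_int (d2 * z1 i)) / qform n c (\<lambda>i. of_int (d1 * z2 i))"
    using d1 d2 unfolding a b scale by (simp add: field_simps)
  moreover have "qform n c (\<lambda>i. of_int (d1 * z2 i)) \<noteq> (0::'a)"
    using assms d1 d2 unfolding b scale by simp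
  moreover have "qform n c (\<lambda>i. of_int (d * z i)) \<in> range (\<lambda>z. qform n c (\<lambda>i. (of_int (z i) :: 'a)))"
    for d z by (rule range_eqI[where x = "\<lambda>i. d * z i"]) simp
  ultimately show ?thesis unfolding ratio_set_def by blast
qed

definition sqrt_step :: "'a::field \<Rightarrow> 'a \<Rightarrow> 'a" where
  "sqrt_step u t = t - (t\<^sup>2 - u) / 2"

locale abs_value =
  fixes N :: "'a::field_char_0 \<Rightarrow> real"
  assumes nonneg: "N x \<ge> 0"
    and zero_iff: "N x = 0 \<longleftrightarrow> x = 0"
    and mult: "N (x * y) = N x * N y"
    and triangle: "N (x + y) \<le> N x + N y"
begin

lemma N_0 [simp]: "N 0 = 0"
  using zero_iff by simp

lemma N_pos: "x \<noteq> 0 \<Longrightarrow> N x > 0"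
  using zero_iff nonneg by (metis less_eq_real_def)

lemma N_1 [simp]: "N 1 = 1"
  using mult[of 1 1] N_pos[of 1] by simp

lemma N_minus [simp]: "N (- x) = N x"
proof -
  have "N (- 1) * N (- 1) = 1" using mult[of "- 1" "- 1"] by simp
  then have "N (- 1) = 1"
    using nonneg[of "- 1"] by (metis abs_of_nonneg abs_square_eq_1 power2_eq_square)
  then show ?thesis using mult[of "- 1" x] by simp
qed

lemma N_diff_commute: "N (x - y) = N (y - x)"
  using N_minus[of "x - y"] by simp

lemma N_diff_triangle: "N (x - z) \<le> N (x - y) + N (y - z)"
  using triangle[of "x - y" "y - z"] by simp

lemma N_divide: "N (x / y) = N x / N y"
proof (cases "y = 0")
  case False
  then show ?thesis using mult[of "x / y" y] N_pos[of y] by (simp add: field_simps)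
qed simp

lemma N_2_le: "N 2 \<le> 2"
  using triangle[of 1 1] by simp

definition tendsto_N :: "('b \<Rightarrow> 'a) \<Rightarrow> 'a \<Rightarrow> 'b filter \<Rightarrow> bool" where
  "tendsto_N f L F \<longleftrightarrow> (\<forall>e>0. eventually (\<lambda>x. N (f x - L) < e) F)"

lemma tendsto_N_D: "tendsto_N f L F \<Longrightarrow> e > 0 \<Longrightarrow> eventually (\<lambda>x. N (f x - L) < e) F"
  unfolding tendsto_N_def by blast

lemma tendsto_N_const: "tendsto_N (\<lambda>x. a) a F"
  unfolding tendsto_N_def by simp

lemma tendsto_N_if_dominated:
  assumes "eventually (\<lambda>x. N (f x - L) \<le> g x) F" and "(g \<longlongrightarrow> 0) F"
  shows "tendsto_N f L F"
  unfolding tendsto_N_def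
proof (intro allI impI)
  fix e :: real assume "e > 0"
  with assms(2) have "eventually (\<lambda>x. g x < e) F" by (rule order_tendstoD)
  with assms(1) show "eventually (\<lambda>x. N (f x - L) < e) F"
    by eventually_elim simp
qed

lemma tendsto_N_add:
  assumes "tendsto_N f L F" and "tendsto_N g K F"
  shows "tendsto_N (\<lambda>x. f x + g x) (L + K) F"
  unfolding tendsto_N_def
proof (intro allI impI)
  fix e :: real assume "e > 0"
  then have "eventually (\<lambda>x. N (f x - L) < e / 2) F" "eventually (\<lambda>x. N (g x - K) < e / 2) F"
    by (intro tendsto_N_D assms; simp)+
  then show "eventually (\<lambda>x. N (f x + g x - (L + K)) < e) F"
  proof eventually_elim
    case (elim x)
    have "N (f x + g x - (L + K)) \<le> N (f x - L) + N (g x - K)"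
      using triangle[of "f x - L" "g x - K"] by (simp add: algebra_simps)
    with elim show ?case by simp
  qed
qed

lemma tendsto_N_eventually_bounded:
  assumes "tendsto_N f L F"
  shows "eventually (\<lambda>x. N (f x) < N L + 1) F"
proof -
  have "eventually (\<lambda>x. N (f x - L) < 1) F"
    using assms by (rule tendsto_N_D) simp
  then show ?thesis
  proof eventually_elim
    case (elim x)
    then show ?case using triangle[of "f x - L" L] by simp
  qed
qed

lemma tendsto_N_mult:
  assumes f: "tendsto_N f L F" and g: "tendsto_N g K F"
  shows "tendsto_N (\<lambda>x. f x * g x) (L * K) F"
  unfolding tendsto_N_def
proof (intro allI impI)
  fix e :: real assume "e > 0"
  define B where "B = N L + 1"
  define C where "C = N K + 1"
  have "B > 0" "C > 0" using nonneg[of L] nonneg[of K] by (simp_all add: B_def C_def)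
  with \<open>e > 0\<close> have "eventually (\<lambda>x. N (f x) < B) F"
    "eventually (\<lambda>x. N (g x - K) < e / (2 * B)) F"
    "eventually (\<lambda>x. N (f x - L) < e / (2 * C)) F"
    using tendsto_N_eventually_bounded[OF f] tendsto_N_D[OF g] tendsto_N_D[OF f]
    by (simp_all add: B_def)
  then show "eventually (\<lambda>x. N (f x * g x - L * K) < e) F"
  proof eventually_elim
    case (elim x)
    have "f x * g x - L * K = f x * (g x - K) + (f x - L) * K" by (simp add: algebra_simps)
    then have "N (f x * g x - L * K) \<le> N (f x) * N (g x - K) + N (f x - L) * N K"
      using triangle mult by metis
    also have "\<dots> \<le> B * N (g x - K) + e / (2 * C) * C"
      using elim nonneg[of "g x - K"] nonneg[of K] \<open>B > 0\<close> \<open>C > 0\<close> \<open>e > 0\<close>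
      by (intro add_mono mult_mono) (auto simp: C_def)
    also have "\<dots> < B * (e / (2 * B)) + e / (2 * C) * C"
      using mult_strict_left_mono[OF elim(2) \<open>B > 0\<close>] by simp
    also have "\<dots> = e" using \<open>B > 0\<close> \<open>C > 0\<close> by simp
    finally show ?case .
  qed
qed

lemma tendsto_N_sum:
  assumes "\<And>i. i \<in> A \<Longrightarrow> tendsto_N (f i) (L i) F"
  shows "tendsto_N (\<lambda>x. \<Sum>i\<in>A. f i x) (\<Sum>i\<in>A. L i) F"
  using assms
proof (induction A rule: infinite_finite_induct)
  case (insert a A)
  then show ?case using tendsto_N_add[of "f a" "L a"] by simp
qed (simp_all add: tendsto_N_const)

lemma tendsto_N_eventually_nonzero:
  assumes "tendsto_N f L F" and "L \<noteq> 0"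
  shows "eventually (\<lambda>x. N (f x) > N L / 2) F"
proof -
  have "eventually (\<lambda>x. N (f x - L) < N L / 2) F"
    using N_pos[of L] \<open>L \<noteq> 0\<close> by (intro tendsto_N_D assms(1)) simp
  then show ?thesis
  proof eventually_elim
    case (elim x)
    then show ?case using N_diff_triangle[of L 0 "f x"] N_diff_commute[of L] by simp
  qed
qed

lemma tendsto_N_inverse:
  assumes f: "tendsto_N f L F" and "L \<noteq> 0"
  shows "tendsto_N (\<lambda>x. inverse (f x)) (inverse L) F"
  unfolding tendsto_N_def
proof (intro allI impI)
  fix e :: real assume "e > 0"
  have NL: "N L > 0" using N_pos \<open>L \<noteq> 0\<close> by simp
  have "eventually (\<lambda>x. N (f x) > N L / 2) F"
    using tendsto_N_eventually_nonzero[OF assms] .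
  moreover have "eventually (\<lambda>x. N (f x - L) < e * (N L * N L / 2)) F"
    using \<open>e > 0\<close> NL by (intro tendsto_N_D f) simp
  ultimately show "eventually (\<lambda>x. N (inverse (f x) - inverse L) < e) F"
  proof eventually_elim
    case (elim x)
    then have "f x \<noteq> 0" using NL by auto
    then have "inverse (f x) - inverse L = (L - f x) / (f x * L)"
      using \<open>L \<noteq> 0\<close> by (simp add: field_simps)
    then have "N (inverse (f x) - inverse L) = N (f x - L) / (N (f x) * N L)"
      by (simp add: N_divide mult N_diff_commute)
    also have "\<dots> \<le> N (f x - L) / (N L / 2 * N L)"
      using elim NL nonneg by (intro divide_left_mono mult_right_mono) auto
    also have "\<dots> < e" using elim NL by (simp add: field_simps)
    finally show ?case .
  qed
qed

lemma tendsto_N_divide: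
  assumes "tendsto_N f L F" and "tendsto_N g K F" and "K \<noteq> 0"
  shows "tendsto_N (\<lambda>x. f x / g x) (L / K) F"
  using tendsto_N_mult[OF assms(1) tendsto_N_inverse[OF assms(2,3)]]
  by (simp add: divide_inverse)

lemma tendsto_N_unique:
  assumes "F \<noteq> bot" and "tendsto_N f a F" and "tendsto_N f b F"
  shows "a = b"
proof (rule ccontr)
  assume "a \<noteq> b"
  then have "N (a - b) / 2 > 0" using N_pos by simp
  then have "eventually (\<lambda>x. N (f x - a) < N (a - b) / 2 \<and> N (f x - b) < N (a - b) / 2) F"
    by (intro eventually_conj tendsto_N_D assms(2,3))
  then obtain x where "N (f x - a) < N (a - b) / 2" "N (f x - b) < N (a - b) / 2"
    using eventually_happens'[OF assms(1)] by blast
  then show False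
    using N_diff_triangle[of a b "f x"] N_diff_commute[of a "f x"] by linarith
qed

lemma tendsto_N_qform:
  assumes "\<And>i. tendsto_N (\<lambda>x. v x i) (w i) F"
  shows "tendsto_N (\<lambda>x. qform n c (v x)) (qform n c w) F"
  unfolding qform_def by (intro tendsto_N_sum tendsto_N_mult tendsto_N_const assms)


lemma tendsto_N_of_rat_sequence:
  assumes "dense_wrt N (range of_rat)"
  obtains q :: "nat \<Rightarrow> rat" where "tendsto_N (\<lambda>m. of_rat (q m)) w sequentially"
proof -
  have "\<exists>r. N (w - of_rat r) < inverse (real (Suc m))" for m
    using assms unfolding dense_wrt_def by simp
  then obtain q where q: "\<And>m. N (w - of_rat (q m)) < inverse (real (Suc m))" by metis
  have "eventually (\<lambda>m. N (of_rat (q m) - w) \<le> inverse (real (Suc m))) sequentially"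
    using q by (simp add: N_diff_commute less_imp_le)
  moreover have "(\<lambda>m. inverse (real (Suc m))) \<longlonglongrightarrow> 0"
    using LIMSEQ_inverse_real_of_nat .
  ultimately show ?thesis by (intro that tendsto_N_if_dominated)
qed

lemma dense_ratio_set_int_if_ratio_set_UNIV:
  assumes rat_dense: "dense_wrt N (range of_rat)"
    and all: "ratio_set (range (qform n c)) = UNIV"
  shows "dense_wrt N (ratio_set (range (\<lambda>z. qform n c (\<lambda>i. of_int (z i)))))"
  unfolding dense_wrt_def
proof (intro allI impI)
  fix x :: 'a and e :: real assume "e > 0"
  have "x \<in> ratio_set (range (qform n c))" using all by simp
  then obtain u v where x: "x = qform n c u / qform n c v" and "qform n c v \<noteq> 0"
    unfolding ratio_set_def by auto
  have "\<forall>i. \<exists>q. tendsto_N (\<lambda>m. of_rat (q m)) (u i) sequentially \<and>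
               (\<exists>r. tendsto_N (\<lambda>m. of_rat (r m)) (v i) sequentially)"
    using tendsto_N_of_rat_sequence[OF rat_dense] by metis
  then obtain a b :: "nat \<Rightarrow> nat \<Rightarrow> rat"
    where a: "\<And>i. tendsto_N (\<lambda>m. of_rat (a i m)) (u i) sequentially"
      and b: "\<And>i. tendsto_N (\<lambda>m. of_rat (b i m)) (v i) sequentially"
    by metis
  define A where "A m = qform n c (\<lambda>i. of_rat (a i m))" for m
  define B where "B m = qform n c (\<lambda>i. of_rat (b i m))" for m
  have A: "tendsto_N A (qform n c u) sequentially" and B: "tendsto_N B (qform n c v) sequentially"
    unfolding A_def B_def by (intro tendsto_N_qform a b)+
  have "tendsto_N (\<lambda>m. A m / B m) x sequentially"
    unfolding x using A B \<open>qform n c v \<noteq> 0\<close> by (rule tendsto_N_divide)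
  then have "eventually (\<lambda>m. N (A m / B m - x) < e) sequentially"
    using \<open>e > 0\<close> by (rule tendsto_N_D)
  moreover have "eventually (\<lambda>m. B m \<noteq> 0) sequentially"
    using tendsto_N_eventually_nonzero[OF B \<open>qform n c v \<noteq> 0\<close>]
    by (rule eventually_mono) (use nonneg[of "qform n c v"] in auto)
  ultimately have "eventually (\<lambda>m. N (A m / B m - x) < e \<and> B m \<noteq> 0) sequentially"
    by (rule eventually_conj)
  then obtain m where close: "N (A m / B m - x) < e" and "B m \<noteq> 0"
    using eventually_happens'[OF sequentially_bot] by blast
  then have "A m / B m \<in> ratio_set (range (\<lambda>z. qform n c (\<lambda>i. of_int (z i))))"
    unfolding A_def B_def by (intro ratio_qform_of_rat_in_ratio_set_int)
  with close show "\<exists>s\<in>ratio_set (range (\<lambda>z. qform n c (\<lambda>i. of_int (z i)))). N (x - s) < e"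
    by (auto simp: N_diff_commute)
qed

lemma geometric_steps_bound:
  assumes step: "\<And>k. N (X (Suc k) - X k) \<le> C / 2 ^ k"
  shows "N (X (k + j) - X k) \<le> 2 * C / 2 ^ k"
proof -
  have telescope: "N (X (k + j) - X k) \<le> 2 * C / 2 ^ k - 2 * C / 2 ^ (k + j)" for j
  proof (induction j)
    case (Suc j)
    have "N (X (k + Suc j) - X k) \<le> N (X (Suc (k + j)) - X (k + j)) + N (X (k + j) - X k)"
      using N_diff_triangle[where y = "X (k + j)"] by simp
    also have "\<dots> \<le> C / 2 ^ (k + j) + (2 * C / 2 ^ k - 2 * C / 2 ^ (k + j))"
      using step Suc.IH by (rule add_mono)
    also have "\<dots> = 2 * C / 2 ^ k - 2 * C / 2 ^ (k + Suc j)"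
      by (simp add: field_simps)
    finally show ?case .
  qed simp
  have "C \<ge> 0" using step[of 0] nonneg[of "X 1 - X 0"] by simp
  then have "0 \<le> 2 * C / 2 ^ (k + j)" by simp
  with telescope[of j] show ?thesis by linarith
qed

lemma sqrt_step_maps_ball:
  assumes u: "N (u - 1) < (N 2)\<^sup>2 / 8" and t: "N (t - 1) \<le> N 2 / 4"
  shows "N (sqrt_step u t - 1) \<le> N 2 / 4"
proof -
  have h: "N 2 > 0" using N_pos by simp
  have "sqrt_step u t - 1 = ((u - 1) - (t - 1) * (t - 1)) / 2"
    unfolding sqrt_step_def by (simp add: field_simps power2_eq_square)
  then have "N (sqrt_step u t - 1) = N ((u - 1) - (t - 1) * (t - 1)) / N 2"
    by (simp only: N_divide)
  also have "\<dots> \<le> (N (u - 1) + N (t - 1) * N (t - 1)) / N 2"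
    using triangle[of "u - 1" "- ((t - 1) * (t - 1))"] h by (intro divide_right_mono) (simp_all add: mult)
  also have "\<dots> \<le> ((N 2)\<^sup>2 / 8 + N 2 / 4 * (N 2 / 4)) / N 2"
    using u t h nonneg[of "t - 1"] by (intro divide_right_mono add_mono mult_mono) auto
  also have "\<dots> \<le> N 2 / 4" using h by (simp add: field_simps power2_eq_square)
  finally show ?thesis .
qed

lemma sqrt_step_contracts:
  assumes t: "N (t - 1) \<le> N 2 / 4" and s: "N (s - 1) \<le> N 2 / 4"
  shows "N (sqrt_step u t - sqrt_step u s) \<le> N (t - s) / 2"
proof -
  have h: "N 2 > 0" using N_pos by simp
  have "sqrt_step u t - sqrt_step u s = (t - s) * ((1 - t) + (1 - s)) / 2"
    unfolding sqrt_step_def by (simp add: field_simps power2_eq_square)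
  then have "N (sqrt_step u t - sqrt_step u s) = N (t - s) * N ((1 - t) + (1 - s)) / N 2"
    by (simp only: N_divide mult)
  also have "\<dots> \<le> N (t - s) * (N 2 / 4 + N 2 / 4) / N 2"
    using triangle[of "1 - t" "1 - s"] t s h nonneg[of "t - s"] N_diff_commute[of 1]
    by (intro divide_right_mono mult_left_mono) auto
  also have "\<dots> = N (t - s) / 2" using h by (simp add: field_simps)
  finally show ?thesis .
qed

end

locale complete_abs_value = abs_value +
  assumes complete: "\<And>X :: nat \<Rightarrow> 'a.
      (\<forall>e>0. \<exists>M. \<forall>m\<ge>M. \<forall>k\<ge>M. N (X m - X k) < e) \<Longrightarrow>
      (\<exists>L. \<forall>e>0. \<exists>M. \<forall>m\<ge>M. N (X m - L) < e)"
begin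

lemma convergent_if_geometric_steps:
  assumes step: "\<And>k. N (X (Suc k) - X k) \<le> C / 2 ^ k"
  obtains L where "tendsto_N X L sequentially"
proof -
  have "C \<ge> 0" using step[of 0] nonneg[of "X 1 - X 0"] by simp
  note bound = geometric_steps_bound[OF step]
  have tail: "N (X m - X k) \<le> 2 * C / 2 ^ M" if "m \<ge> M" "k \<ge> M" for m k M
  proof -
    have "N (X m - X k) \<le> 2 * C / 2 ^ min m k"
    proof (cases "m \<ge> k")
      case True
      then obtain j where "m = k + j" using le_Suc_ex by blast
      then show ?thesis using bound[of k j] True by (simp add: min_absorb2)
    next
      case False
      then obtain j where "k = m + j" using le_Suc_ex[of m k] by auto
      then show ?thesis using bound[of m j] False N_diff_commute[of "X m"] by (simp add: min_absorb1)
    qed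
    also have "\<dots> \<le> 2 * C / 2 ^ M"
      using that \<open>C \<ge> 0\<close> by (intro divide_left_mono power_increasing) auto
    finally show ?thesis .
  qed
  have "\<forall>e>0. \<exists>M. \<forall>m\<ge>M. \<forall>k\<ge>M. N (X m - X k) < e"
  proof (intro allI impI)
    fix e :: real assume "e > 0"
    have "eventually (\<lambda>M. 2 * C / 2 ^ M < e) sequentially"
      using LIMSEQ_divide_realpow_zero[of 2 "2 * C"] \<open>e > 0\<close> by (intro order_tendstoD(2)) simp_all
    then obtain M where "2 * C / 2 ^ M < e"
      by (meson eventually_sequentially order_refl)
    then show "\<exists>M. \<forall>m\<ge>M. \<forall>k\<ge>M. N (X m - X k) < e"
      using tail by (meson order_le_less_trans)
  qed
  then show ?thesis
    using complete[of X] that unfolding tendsto_N_def eventually_sequentially by blast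
qed

lemma exists_sqrt_near_one:
  assumes u: "N (u - 1) < (N 2)\<^sup>2 / 8"
  obtains t where "u = t\<^sup>2"
proof -
  define T where "T k = (sqrt_step u ^^ k) 1" for k
  have T_Suc: "T (Suc k) = sqrt_step u (T k)" for k
    by (simp add: T_def)
  have ball: "N (T k - 1) \<le> N 2 / 4" for k
  proof (induction k)
    case 0
    show ?case using nonneg[of 2] by (simp add: T_def)
  next
    case (Suc k)
    show ?case unfolding T_Suc using u Suc.IH by (rule sqrt_step_maps_ball)
  qed
  have step: "N (T (Suc k) - T k) \<le> (N 2 / 4) / 2 ^ k" for k
  proof (induction k)
    case 0
    show ?case using ball[of 1] by (simp add: T_def)
  next
    case (Suc k)
    have "N (T (Suc (Suc k)) - T (Suc k)) \<le> N (T (Suc k) - T k) / 2"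
      unfolding T_Suc[of "Suc k"] T_Suc[of k]
      using ball[of "Suc k", unfolded T_Suc] ball[of k] by (rule sqrt_step_contracts)
    with Suc.IH show ?case by simp
  qed
  obtain L where L: "tendsto_N T L sequentially"
    using convergent_if_geometric_steps[OF step] .
  have "tendsto_N (\<lambda>k. T k * T k) u sequentially"
  proof (rule tendsto_N_if_dominated)
    have "T k * T k - u = 2 * (T k - T (Suc k))" for k
      by (simp add: T_Suc sqrt_step_def power2_eq_square)
    then have "N (T k * T k - u) = N 2 * N (T (Suc k) - T k)" for k
      by (simp only: mult N_diff_commute)
    then have "N (T k * T k - u) \<le> N 2 * ((N 2 / 4) / 2 ^ k)" for k
      using mult_left_mono[OF step nonneg] by simp
    then show "eventually (\<lambda>k. N (T k * T k - u) \<le> N 2 * ((N 2 / 4) / 2 ^ k)) sequentially"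
      by (intro always_eventually allI)
    show "(\<lambda>k. N 2 * ((N 2 / 4) / 2 ^ k)) \<longlonglongrightarrow> 0"
      using LIMSEQ_divide_realpow_zero[of 2 "N 2 * (N 2 / 4)"] by simp
  qed
  moreover have "tendsto_N (\<lambda>k. T k * T k) (L * L) sequentially"
    using L L by (rule tendsto_N_mult)
  ultimately have "u = L * L"
    by (rule tendsto_N_unique[OF sequentially_bot])
  then show ?thesis by (intro that) (simp add: power2_eq_square)
qed

lemma dense_union_sq_cosets_contains_nonzero:
  assumes "dense_wrt N S" and "union_sq_cosets (S - {0})" and "x \<noteq> 0"
  shows "x \<in> S"
proof -
  define \<delta> where "\<delta> = (N 2)\<^sup>2 / 8"
  have "(N 2)\<^sup>2 \<le> 2\<^sup>2" using N_2_le nonneg[of 2] by (rule power_mono)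
  then have "\<delta> > 0" "\<delta> < 1" using N_pos[of 2] by (simp_all add: \<delta>_def)
  have "N x > 0" using N_pos \<open>x \<noteq> 0\<close> by simp
  then obtain s where "s \<in> S" and "N (x - s) < \<delta> * N x"
    using assms(1) \<open>\<delta> > 0\<close> unfolding dense_wrt_def by (meson mult_pos_pos)
  have "s / x - 1 = (s - x) / x" using \<open>x \<noteq> 0\<close> by (simp add: field_simps)
  then have "N (s / x - 1) = N (x - s) / N x" by (simp only: N_divide N_diff_commute[of s])
  also have "\<dots> < \<delta>" using \<open>N (x - s) < \<delta> * N x\<close> \<open>N x > 0\<close> by (simp add: divide_less_eq)
  finally have "N (s / x - 1) < \<delta>" .
  then obtain t where t: "s / x = t\<^sup>2" using exists_sqrt_near_one unfolding \<delta>_def by blast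
  have "s / x \<noteq> 0"
    using \<open>N (s / x - 1) < \<delta>\<close> \<open>\<delta> < 1\<close> by auto
  then have "s \<in> S - {0}" and "t \<noteq> 0" using \<open>s \<in> S\<close> t by auto
  moreover have "x = s * (inverse t)\<^sup>2"
    using t \<open>x \<noteq> 0\<close> \<open>t \<noteq> 0\<close> by (simp add: field_simps power2_eq_square)
  ultimately show ?thesis
    using assms(2) unfolding union_sq_cosets_def by (metis DiffD1 inverse_nonzero_iff_nonzero)
qed

lemma ratio_set_UNIV_if_dense_ratio_set_int:
  assumes "dense_wrt N (ratio_set (range (\<lambda>z. qform n c (\<lambda>i. of_int (z i)))))"
  shows "ratio_set (range (qform n c)) = UNIV"
proof -
  have "ratio_set (range (\<lambda>z. qform n c (\<lambda>i. of_int (z i)))) \<subseteq> ratio_set (range (qform n c))"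
    by (rule ratio_set_mono) auto
  then have dense: "dense_wrt N (ratio_set (range (qform n c)))"
    using assms unfolding dense_wrt_def by blast
  have "x \<in> ratio_set (range (qform n c))" for x
  proof (cases "x = 0")
    case True
    have "ratio_set (range (qform n c)) \<noteq> {}"
      using dense zero_less_one unfolding dense_wrt_def by blast
    then show ?thesis
      using zero_in_ratio_set[of "range (qform n c)"] qform_zero True by (metis rangeI)
  next
    case False
    show ?thesis
      using dense union_sq_cosets_ratio_set[OF union_sq_cosets_range_qform] False
      by (rule dense_union_sq_cosets_contains_nonzero)
  qed
  then show ?thesis by blast
qed

end

theorem lemma3:
  fixes p :: nat and N :: "'a::field_char_0 \<Rightarrow> real"
    and n :: nat and c :: "nat \<Rightarrow> nat \<Rightarrow> 'a"
  assumes "prime p"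
    and "is_Qp p N"
    and "nonzero_qform n c"
  shows "union_sq_cosets (range (qform n c) - {0})
       \<and> union_sq_cosets (ratio_set (range (qform n c)) - {0})
       \<and> (dense_wrt N (ratio_set ((\<lambda>z. qform n c (\<lambda>i. of_int (z i))) ` UNIV))
            \<longleftrightarrow> ratio_set (range (qform n c)) = UNIV)"
proof -
  interpret complete_abs_value N
    using assms(2) unfolding is_Qp_def by unfold_locales blast+
  have "dense_wrt N (range of_rat)"
    using assms(2) unfolding is_Qp_def dense_wrt_def by blast
  then show ?thesis
    using union_sq_cosets_range_qform union_sq_cosets_ratio_set[OF union_sq_cosets_range_qform]
      dense_ratio_set_int_if_ratio_set_UNIV ratio_set_UNIV_if_dense_ratio_set_int
    by blast
qed

end
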